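(* Let $f$ be a nonzero real polynomial in $x_1,\ldots,x_n$ all of whose coefficients in the scaled monomial basis lie in $\{0,1\}$, and let $\mathcal{M}$ be the set of monomials occurring in $f$ (those with coefficient $1$). Then for every integer $k\ge 0$, $$\dim \partial^{=k} f \geq \frac{\sum_{P \in \mathcal{M}} \binom{\sup(P)}{k}}{|\mathcal{M}|^2},$$ where $\sup(P)$ denotes the number of distinct variables occurring in the monomial $P$.
   Context: For $\alpha\in\mathbb{N}^n$ the scaled monomial is $x^\alpha = x_1^{\alpha_1}\cdots x_n^{\alpha_n}/(\alpha_1!\cdots\alpha_n!)$; these form a basis of $\mathbb{R}[x_1,\ldots,x_n]$ (the scaled monomial basis), and coefficients of $f$ are taken with respect to this basis, i.e. $f=\sum_\alpha a_\alpha x^\alpha$. For $\beta\in\mathbb{N}^n$, $\partial_\beta f$ is the partial derivative differentiating $\beta_i$ times with respect to $x_i$; $\partial^{=k} f$ is the real linear span of all $\partial_\beta f$ with $\beta_1+\cdots+\beta_n=k$. *)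

theory Defs
  imports Complex_Main "HOL-Library.Poly_Mapping"
begin

text \<open>A real polynomial is given by its finitely supported
  coefficient map with respect to the scaled monomial basis x^alpha = prod x_i^(alpha_i)/alpha_i!,
  i.e. f = sum_alpha (Poly_Mapping.lookup f alpha) x^alpha.\<close>

type_synonym monom = "nat \<Rightarrow>\<^sub>0 nat"
type_synonym mpoly = "monom \<Rightarrow>\<^sub>0 real"

definition mp_scale :: "real \<Rightarrow> mpoly \<Rightarrow> mpoly" where
  "mp_scale c f = Poly_Mapping.map (\<lambda>a. c * a) f"

text \<open>In the scaled basis,
  d/dx_i x^alpha = x^(alpha - e_i) if alpha_i \<ge> 1 and 0 otherwise, so the coefficient of
  x^gamma in d/dx_i f is the coefficient of x^(gamma + e_i) in f.\<close>
definition pd :: "nat \<Rightarrow> mpoly \<Rightarrow> mpoly" where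
  "pd i f = Abs_poly_mapping (\<lambda>\<gamma>. Poly_Mapping.lookup f (\<gamma> + Poly_Mapping.single i 1))"

definition pderivs :: "monom \<Rightarrow> mpoly \<Rightarrow> mpoly" where
  "pderivs \<beta> f = foldr (\<lambda>i g. (pd i ^^ Poly_Mapping.lookup \<beta> i) g) (sorted_list_of_set (Poly_Mapping.keys \<beta>)) f"

definition pderivs_eq :: "nat \<Rightarrow> nat \<Rightarrow> mpoly \<Rightarrow> mpoly set" where
  "pderivs_eq n k f = module.span mp_scale
     {pderivs \<beta> f | \<beta>. Poly_Mapping.keys \<beta> \<subseteq> {..<n} \<and> (\<Sum>i<n. Poly_Mapping.lookup \<beta> i) = k}"

definition mp_dim :: "mpoly set \<Rightarrow> nat" where
  "mp_dim V = vector_space.dim mp_scale V"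

end

theory Submission
  imports Defs
begin

text \<open>For a monomial \<open>P\<close> of \<open>f\<close> and a \<open>k\<close>-subset \<open>S\<close> of its variables, the derivative
  \<open>\<partial>\<^sub>S f\<close> (once in each variable of \<open>S\<close>) is a nonzero element of \<open>\<partial>\<^sup>=\<^sup>k f\<close>. If its leading
  monomial is \<open>\<gamma>\<close>, then \<open>\<gamma> + 1\<^sub>S\<close> is a monomial of \<open>f\<close>, and it determines \<open>S\<close>; so at most
  \<open>|M|\<close> of the sets \<open>S\<close> share a leading monomial. There are at least
  \<open>(\<Sum>P\<in>M. sup P choose k) / |M|\<close> such sets, hence at least that sum divided by \<open>|M|\<^sup>2\<close>
  distinct leading monomials among the \<open>k\<close>-th derivatives, and polynomials with distinct leading
  monomials are linearly independent.\<close>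

lemma lookup_mp_scale [simp]: "Poly_Mapping.lookup (mp_scale c f) \<alpha> = c * Poly_Mapping.lookup f \<alpha>"
  by (simp add: mp_scale_def map.rep_eq when_def)

interpretation mp: vector_space mp_scale
  by unfold_locales (auto intro!: poly_mapping_eqI simp: lookup_add algebra_simps)

lemma lookup_pd [simp]:
  "Poly_Mapping.lookup (pd i f) \<gamma> = Poly_Mapping.lookup f (\<gamma> + Poly_Mapping.single i 1)"
proof -
  have "{\<gamma>. Poly_Mapping.lookup f (\<gamma> + Poly_Mapping.single i 1) \<noteq> 0}
      = (\<lambda>\<gamma>. \<gamma> + Poly_Mapping.single i 1) -` Poly_Mapping.keys f"
    by (auto simp: in_keys_iff)
  moreover have "finite \<dots>"
    by (rule finite_vimageI) (auto simp: inj_def)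
  ultimately show ?thesis
    by (simp add: pd_def)
qed

lemma lookup_pd_funpow:
  "Poly_Mapping.lookup ((pd i ^^ m) f) \<gamma> = Poly_Mapping.lookup f (\<gamma> + Poly_Mapping.single i m)"
proof (induction m arbitrary: \<gamma>)
  case (Suc m)
  have "Poly_Mapping.single i (Suc m) = Poly_Mapping.single i 1 + Poly_Mapping.single i m"
    by (simp flip: single_add)
  with Suc show ?case
    by (simp add: add.assoc)
qed simp

lemma lookup_pderivs: "Poly_Mapping.lookup (pderivs \<beta> f) \<gamma> = Poly_Mapping.lookup f (\<gamma> + \<beta>)"
proof -
  have foldr: "Poly_Mapping.lookup (foldr (\<lambda>i g. (pd i ^^ Poly_Mapping.lookup \<beta> i) g) is f) \<gamma>
      = Poly_Mapping.lookup f (\<gamma> + (\<Sum>i\<leftarrow>is. Poly_Mapping.single i (Poly_Mapping.lookup \<beta> i)))"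
    for "is" \<gamma>
    by (induction "is" arbitrary: \<gamma>) (simp_all add: lookup_pd_funpow add_ac)
  have "(\<Sum>i\<leftarrow>sorted_list_of_set (Poly_Mapping.keys \<beta>). Poly_Mapping.single i (Poly_Mapping.lookup \<beta> i))
      = (\<Sum>i\<in>Poly_Mapping.keys \<beta>. Poly_Mapping.single i (Poly_Mapping.lookup \<beta> i))"
    by (simp add: sum_list_distinct_conv_sum_set)
  also have "\<dots> = \<beta>"
    by (rule poly_mapping_eqI) (simp add: lookup_sum lookup_single when_def in_keys_iff)
  finally show ?thesis
    by (simp add: pderivs_def foldr)
qed

text \<open>\<open>Max\<close> is taken in the lexicographic order that \<open>Poly_Mapping\<close> puts on monomials;
  any linear order would serve.\<close>

definition lead_monom :: "mpoly \<Rightarrow> monom" where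
  "lead_monom p = Max (Poly_Mapping.keys p)"

lemma lead_monom_in_keys: "p \<noteq> 0 \<Longrightarrow> lead_monom p \<in> Poly_Mapping.keys p"
  by (simp add: lead_monom_def)

lemma lookup_eq_0_if_lead_monom_less:
  "lead_monom p < \<alpha> \<Longrightarrow> Poly_Mapping.lookup p \<alpha> = 0"
  by (metis Max_ge finite_keys in_keys_iff lead_monom_def leD)

lemma lin_comb_eq_0_if_inj_on_lead_monom:
  assumes "finite S" "0 \<notin> S" "inj_on lead_monom S" "(\<Sum>w\<in>S. mp_scale (u w) w) = 0"
  shows "\<forall>w\<in>S. u w = 0"
  using assms
proof (induction S rule: finite_ranking_induct[where f = lead_monom])
  case (insert p S)
  show ?case
  proof (cases "p \<in> S")
    case True
    with insert show ?thesis
      by (simp add: insert_absorb)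
  next
    case False
    have lt: "lead_monom q < lead_monom p" if "q \<in> S" for q
    proof -
      have "lead_monom q \<noteq> lead_monom p"
        using insert.prems(2) False that by (auto simp: inj_on_insert)
          (metis image_eqI)
      with insert.hyps(2)[OF that] show ?thesis
        by simp
    qed
    have "(\<Sum>w\<in>S. u w * Poly_Mapping.lookup w (lead_monom p)) = 0"
      by (rule sum.neutral) (simp add: lt lookup_eq_0_if_lead_monom_less)
    then have "0 = u p * Poly_Mapping.lookup p (lead_monom p)"
      using arg_cong[OF insert.prems(3), of "\<lambda>q. Poly_Mapping.lookup q (lead_monom p)"]
        insert.hyps(1) False by (simp add: lookup_add lookup_sum)
    then have "u p = 0"
      using insert.prems(1) lead_monom_in_keys[of p] by (auto simp: in_keys_iff)
    moreover have "\<forall>w\<in>S. u w = 0"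
      using insert.IH insert.prems \<open>u p = 0\<close> insert.hyps(1) False
      by (simp add: inj_on_insert)
    ultimately show ?thesis
      by simp
  qed
qed simp

lemma independent_if_inj_on_lead_monom:
  assumes "0 \<notin> T" "inj_on lead_monom T"
  shows "mp.independent T"
proof -
  have "\<forall>w\<in>S. u w = 0" if "S \<subseteq> T" "finite S" "(\<Sum>w\<in>S. mp_scale (u w) w) = 0" for S u
    using that assms inj_on_subset by (intro lin_comb_eq_0_if_inj_on_lead_monom) auto
  then show ?thesis
    unfolding mp.independent_explicit_finite_subsets by blast
qed

lemma card_lead_monoms_le_dim:
  assumes "finite G" "A \<subseteq> mp.span G" "0 \<notin> A"
  shows "card (lead_monom ` A) \<le> mp.dim G"
proof -
  define T where "T = inv_into A lead_monom ` lead_monom ` A"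
  have "T \<subseteq> A"
    by (auto simp: T_def inv_into_into)
  have "inj_on lead_monom T"
    by (rule inj_onI) (auto simp: T_def f_inv_into_f)
  moreover have "0 \<notin> T"
    using \<open>T \<subseteq> A\<close> assms(3) by blast
  ultimately have indep: "mp.independent T"
    by (intro independent_if_inj_on_lead_monom)
  have card_T: "card T = card (lead_monom ` A)"
    unfolding T_def by (rule card_image) (rule inj_on_inv_into, rule order_refl)
  obtain Bs where Bs: "Bs \<subseteq> G" "mp.independent Bs" "G \<subseteq> mp.span Bs" "card Bs = mp.dim G"
    by (rule mp.basis_exists)
  have "T \<subseteq> mp.span Bs"
    using \<open>T \<subseteq> A\<close> assms(2) mp.span_minimal[OF Bs(3) mp.subspace_span] by blast
  moreover have "finite Bs"
    using Bs(1) assms(1) by (rule finite_subset)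
  ultimately show ?thesis
    using mp.independent_span_bound[of Bs T] indep card_T Bs(4) by simp
qed

lemma finite_multi_indices_of_degree:
  "finite {\<beta>::monom. Poly_Mapping.keys \<beta> \<subseteq> {..<n} \<and> (\<Sum>i<n. Poly_Mapping.lookup \<beta> i) = k}"
    (is "finite ?A")
proof -
  have "?A \<subseteq> Poly_Mapping.lookup -`
      {h. \<forall>i. (i \<in> {..<n} \<longrightarrow> h i \<in> {..k}) \<and> (i \<notin> {..<n} \<longrightarrow> h i = 0)}"
    by (auto simp: in_keys_iff intro: order_trans[OF member_le_sum[of _ "{..<n}"]])
  moreover have "finite (Poly_Mapping.lookup -`
      {h. \<forall>i. (i \<in> {..<n} \<longrightarrow> h i \<in> {..k}) \<and> (i \<notin> {..<n} \<longrightarrow> h i = 0)})"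
    by (intro finite_vimageI finite_set_of_finite_funs) (auto simp: inj_def poly_mapping_eqI)
  ultimately show ?thesis
    by (rule finite_subset)
qed

lemma card_lead_monoms_le_mp_dim_pderivs_eq:
  assumes "A \<subseteq> {pderivs \<beta> f | \<beta>. Poly_Mapping.keys \<beta> \<subseteq> {..<n} \<and> (\<Sum>i<n. Poly_Mapping.lookup \<beta> i) = k}"
    and "0 \<notin> A"
  shows "card (lead_monom ` A) \<le> mp_dim (pderivs_eq n k f)"
proof -
  let ?G = "{pderivs \<beta> f | \<beta>. Poly_Mapping.keys \<beta> \<subseteq> {..<n} \<and> (\<Sum>i<n. Poly_Mapping.lookup \<beta> i) = k}"
  have "?G = (\<lambda>\<beta>. pderivs \<beta> f) ` {\<beta>. Poly_Mapping.keys \<beta> \<subseteq> {..<n} \<and> (\<Sum>i<n. Poly_Mapping.lookup \<beta> i) = k}"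
    by blast
  then have "finite ?G"
    using finite_multi_indices_of_degree by simp
  moreover have "A \<subseteq> mp.span ?G"
    using assms(1) mp.span_superset by blast
  ultimately have "card (lead_monom ` A) \<le> mp.dim ?G"
    using assms(2) by (rule card_lead_monoms_le_dim)
  then show ?thesis
    by (simp add: mp_dim_def pderivs_eq_def)
qed

lemma pderivs_neq_0: "\<gamma> + \<beta> \<in> Poly_Mapping.keys f \<Longrightarrow> pderivs \<beta> f \<noteq> 0"
  by (metis in_keys_iff lookup_pderivs lookup_zero)

lemma lead_monom_pderivs_add_in_keys:
  "pderivs \<beta> f \<noteq> 0 \<Longrightarrow> lead_monom (pderivs \<beta> f) + \<beta> \<in> Poly_Mapping.keys f"
  using lead_monom_in_keys[of "pderivs \<beta> f"] by (simp add: in_keys_iff lookup_pderivs)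

definition indicator_monom :: "nat set \<Rightarrow> monom" where
  "indicator_monom S = (\<Sum>i\<in>S. Poly_Mapping.single i 1)"

lemma lookup_indicator_monom:
  "finite S \<Longrightarrow> Poly_Mapping.lookup (indicator_monom S) i = (if i \<in> S then 1 else 0)"
  by (simp add: indicator_monom_def lookup_sum lookup_single when_def)

lemma keys_indicator_monom: "finite S \<Longrightarrow> Poly_Mapping.keys (indicator_monom S) = S"
  by (auto simp: in_keys_iff lookup_indicator_monom split: if_splits)

lemma minus_indicator_monom_add:
  "S \<subseteq> Poly_Mapping.keys \<alpha> \<Longrightarrow> \<alpha> - indicator_monom S + indicator_monom S = \<alpha>"
  by (rule poly_mapping_eqI)
    (auto simp: lookup_add lookup_minus lookup_indicator_monom in_keys_iff finite_subset)

lemma card_indicator_derivs_with_lead_monom_le: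
  assumes "\<forall>S\<in>\<S>. finite S \<and> pderivs (indicator_monom S) f \<noteq> 0"
  shows "card {S\<in>\<S>. lead_monom (pderivs (indicator_monom S) f) = \<gamma>} \<le> card (Poly_Mapping.keys f)"
proof (rule card_inj_on_le)
  show "inj_on (\<lambda>S. \<gamma> + indicator_monom S) {S\<in>\<S>. lead_monom (pderivs (indicator_monom S) f) = \<gamma>}"
    (is "inj_on _ ?F")
  proof (rule inj_onI)
    fix S S' assume "S \<in> ?F" "S' \<in> ?F" "\<gamma> + indicator_monom S = \<gamma> + indicator_monom S'"
    then show "S = S'"
      using assms keys_indicator_monom by (metis (no_types, lifting) add_left_cancel mem_Collect_eq)
  qed
  show "(\<lambda>S. \<gamma> + indicator_monom S) ` {S\<in>\<S>. lead_monom (pderivs (indicator_monom S) f) = \<gamma>}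
      \<subseteq> Poly_Mapping.keys f"
    using assms lead_monom_pderivs_add_in_keys by blast
qed simp

lemma card_le_card_image_mult:
  assumes "finite A" "\<And>y. y \<in> h ` A \<Longrightarrow> card {x\<in>A. h x = y} \<le> m"
  shows "card A \<le> card (h ` A) * m"
proof -
  have "card A = card (\<Union>y\<in>h ` A. {x\<in>A. h x = y})"
    by (rule arg_cong[where f = card]) blast
  also have "\<dots> \<le> (\<Sum>y\<in>h ` A. card {x\<in>A. h x = y})"
    using assms(1) by (intro card_UN_le finite_imageI)
  also have "\<dots> \<le> card (h ` A) * m"
    using sum_bounded_above[of "h ` A" "\<lambda>y. card {x\<in>A. h x = y}" m] assms(2) by simp
  finally show ?thesis .
qed

lemma finite_subsets_of_members:
  assumes "finite M" "\<And>P. P \<in> M \<Longrightarrow> finite (X P)"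
  shows "finite {S. \<exists>P\<in>M. S \<subseteq> X P \<and> card S = k}"
proof -
  have "{S. \<exists>P\<in>M. S \<subseteq> X P \<and> card S = k} \<subseteq> Pow (\<Union>P\<in>M. X P)"
    by auto
  then show ?thesis
    using assms by (simp add: finite_subset)
qed

lemma sum_card_choose_le_card_mult_card_subsets:
  assumes "finite M" "\<And>P. P \<in> M \<Longrightarrow> finite (X P)"
  shows "(\<Sum>P\<in>M. card (X P) choose k) \<le> card M * card {S. \<exists>P\<in>M. S \<subseteq> X P \<and> card S = k}"
proof -
  let ?B = "{S. \<exists>P\<in>M. S \<subseteq> X P \<and> card S = k}"
  have "finite ?B"
    using assms by (rule finite_subsets_of_members)
  have "(\<Sum>P\<in>M. card (X P) choose k) = (\<Sum>P\<in>M. card {S. S \<subseteq> X P \<and> card S = k})"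
    using assms(2) by (simp add: n_subsets)
  also have "\<dots> \<le> (\<Sum>P\<in>M. card ?B)"
    using \<open>finite ?B\<close> by (intro sum_mono card_mono) auto
  finally show ?thesis
    by simp
qed

theorem sum_card_keys_choose_le_mp_dim_pderivs_eq:
  assumes "\<forall>\<alpha>\<in>Poly_Mapping.keys f. Poly_Mapping.keys \<alpha> \<subseteq> {..<n}"
  shows "(\<Sum>P\<in>Poly_Mapping.keys f. card (Poly_Mapping.keys P) choose k)
    \<le> card (Poly_Mapping.keys f) ^ 2 * mp_dim (pderivs_eq n k f)"
proof -
  define m where "m = card (Poly_Mapping.keys f)"
  define B where "B = {S. \<exists>P\<in>Poly_Mapping.keys f. S \<subseteq> Poly_Mapping.keys P \<and> card S = k}"
  define D where "D S = pderivs (indicator_monom S) f" for S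
  have "finite B"
    unfolding B_def by (rule finite_subsets_of_members) simp_all
  have B_member: "\<exists>P\<in>Poly_Mapping.keys f. S \<subseteq> Poly_Mapping.keys P \<and> card S = k" if "S \<in> B" for S
    using that by (simp add: B_def)
  have B_finite: "finite S" if "S \<in> B" for S
    using B_member[OF that] finite_keys finite_subset by blast
  have D_neq_0: "D S \<noteq> 0" if "S \<in> B" for S
    using B_member[OF that] minus_indicator_monom_add pderivs_neq_0 unfolding D_def by metis
  have D_order_k: "D ` B \<subseteq> {pderivs \<beta> f | \<beta>. Poly_Mapping.keys \<beta> \<subseteq> {..<n} \<and> (\<Sum>i<n. Poly_Mapping.lookup \<beta> i) = k}"
  proof clarify
    fix S assume "S \<in> B"
    then have "S \<subseteq> {..<n}" "card S = k" "finite S"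
      using assms B_member[of S] B_finite by blast+
    then have "(\<Sum>i<n. Poly_Mapping.lookup (indicator_monom S) i) = k"
      by (simp add: lookup_indicator_monom sum.If_cases Int_absorb1)
    with \<open>S \<subseteq> {..<n}\<close> \<open>finite S\<close> show "\<exists>\<beta>. D S = pderivs \<beta> f \<and> Poly_Mapping.keys \<beta> \<subseteq> {..<n}
        \<and> (\<Sum>i<n. Poly_Mapping.lookup \<beta> i) = k"
      unfolding D_def by (intro exI[of _ "indicator_monom S"]) (simp add: keys_indicator_monom)
  qed
  have sum_le: "(\<Sum>P\<in>Poly_Mapping.keys f. card (Poly_Mapping.keys P) choose k) \<le> m * card B"
    unfolding m_def B_def by (rule sum_card_choose_le_card_mult_card_subsets) simp_all
  have "card B \<le> card ((lead_monom \<circ> D) ` B) * m"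
  proof (rule card_le_card_image_mult[OF \<open>finite B\<close>])
    show "card {S\<in>B. (lead_monom \<circ> D) S = \<gamma>} \<le> m" for \<gamma>
      unfolding m_def D_def o_def using B_finite D_neq_0[unfolded D_def]
      by (intro card_indicator_derivs_with_lead_monom_le) blast
  qed
  also have "card ((lead_monom \<circ> D) ` B) \<le> mp_dim (pderivs_eq n k f)"
  proof -
    have "0 \<notin> D ` B"
      using D_neq_0 by force
    then show ?thesis
      unfolding image_comp[symmetric] by (rule card_lead_monoms_le_mp_dim_pderivs_eq[OF D_order_k])
  qed
  finally have "card B \<le> mp_dim (pderivs_eq n k f) * m"
    by simp
  then have "m * card B \<le> m ^ 2 * mp_dim (pderivs_eq n k f)"
    using mult_le_mono2[of _ _ m] by (simp add: power2_eq_square mult_ac)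
  with sum_le show ?thesis
    unfolding m_def by (rule order_trans)
qed

theorem theorem2:
  fixes n k :: nat and f :: mpoly
  assumes "f \<noteq> 0"
    and "\<forall>\<alpha>\<in>Poly_Mapping.keys f. Poly_Mapping.keys \<alpha> \<subseteq> {..<n}"
    and "\<forall>\<alpha>. Poly_Mapping.lookup f \<alpha> \<in> {0, 1}"
  shows "real (mp_dim (pderivs_eq n k f)) \<ge>
           (\<Sum>P\<in>Poly_Mapping.keys f. real (card (Poly_Mapping.keys P) choose k)) / real (card (Poly_Mapping.keys f)) ^ 2"
proof -
  have "card (Poly_Mapping.keys f) > 0"
    using assms(1) by (simp add: card_gt_0_iff)
  moreover have "real (\<Sum>P\<in>Poly_Mapping.keys f. card (Poly_Mapping.keys P) choose k)
      \<le> real (card (Poly_Mapping.keys f)) ^ 2 * real (mp_dim (pderivs_eq n k f))"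
    using of_nat_mono[OF sum_card_keys_choose_le_mp_dim_pderivs_eq[OF assms(2), of k], where 'a = real]
    by simp
  ultimately show ?thesis
    using assms(1) by (subst pos_divide_le_eq) (simp_all add: mult.commute)
qed

end
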